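(* Let $t>2$ and let $G=K_{n_1,n_2,\dots,n_t}$ be the complete $t$-partite graph with parts of sizes $n_1,\dots,n_t$, where $n_i\geq 2$ for all $i=1,\dots,t$. Then $G$ is a $\mathcal{P}$ position for Grim if and only if $|V(G)|=n_1+\dots+n_t$ is even.
   Context: Grim is a two-player game on a finite simple undirected graph. Any isolated vertices of the starting graph are deleted before play begins. Players alternate moves; a move consists of selecting a vertex of the current graph and deleting it together with all its incident edges, after which every vertex that has become isolated is also deleted. The player who makes the last legal move wins (a player facing the empty graph has no move and loses). A graph is an $\mathcal{N}$ position if the player about to move has a winning strategy, and a $\mathcal{P}$ position otherwise. *)

theory Defs
  imports Main
begin

text \<open>A finite simple graph with its isolated vertices deleted is determined by its
edge set: we represent it as a set of edges, each edge a 2-element set of vertices.\<close>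

definition grim_vertices :: "'a set set \<Rightarrow> 'a set" where
  "grim_vertices E = \<Union>E"

text \<open>Grim move: delete vertex v and all incident edges; vertices that become isolated
disappear automatically (they no longer occur in any edge).\<close>
definition grim_move :: "'a \<Rightarrow> 'a set set \<Rightarrow> 'a set set" where
  "grim_move v E = {e \<in> E. v \<notin> e}"

text \<open>P positions (previous player wins) and N positions (next player wins),
last player to move wins.\<close>
inductive grimP :: "'a set set \<Rightarrow> bool" and grimN :: "'a set set \<Rightarrow> bool" where
  P_intro: "(\<And>v. v \<in> grim_vertices E \<Longrightarrow> grimN (grim_move v E)) \<Longrightarrow> grimP E"
| N_intro: "v \<in> grim_vertices E \<Longrightarrow> grimP (grim_move v E) \<Longrightarrow> grimN E"

definition complete_multipartite :: "nat \<Rightarrow> (nat \<Rightarrow> 'a set) \<Rightarrow> 'a set set" where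
  "complete_multipartite t P =
     {{x, y} | x y. \<exists>i j. i < t \<and> j < t \<and> i \<noteq> j \<and> x \<in> P i \<and> y \<in> P j}"

end

theory Submission
  imports Defs "HOL-Library.Disjoint_Sets"
begin

text \<open>Call a family of disjoint finite parts admissible if no part is a singleton. From an
admissible family with an even number of vertices every move leaves an odd number, and the
second player can always restore admissibility and evenness by deleting one more vertex:
the last vertex of the part just made a singleton if there is one, and otherwise a vertex of
an odd part, which has at least three vertices. Hence even admissible positions are
\<open>\<P>\<close> positions, and an odd one with two nonempty parts is an \<open>\<N>\<close> position, since the same
reply leads to an even one.\<close>

lemma grimP_grimN_exclusive:
  shows grimP_imp_not_grimN: "grimP E \<Longrightarrow> \<not> grimN E"
    and grimN_imp_not_grimP: "grimN E \<Longrightarrow> \<not> grimP E"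
proof (induction rule: grimP_grimN.inducts)
  case (P_intro E)
  then show ?case by (metis grimN.cases)
next
  case (N_intro v E)
  then show ?case by (metis grimP.cases)
qed

lemma grim_move_complete_multipartite:
  "grim_move v (complete_multipartite t Q) = complete_multipartite t (\<lambda>k. Q k - {v})"
  unfolding grim_move_def complete_multipartite_def by blast

lemma grim_vertices_complete_multipartite:
  "v \<in> grim_vertices (complete_multipartite t Q) \<longleftrightarrow>
     (\<exists>i<t. v \<in> Q i \<and> (\<exists>j<t. j \<noteq> i \<and> Q j \<noteq> {}))"
  unfolding grim_vertices_def complete_multipartite_def by blast

lemma disjoint_family_on_Diff_singleton:
  "disjoint_family_on Q I \<Longrightarrow> disjoint_family_on (\<lambda>k. Q k - {v}) I"
  unfolding disjoint_family_on_def by blast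

lemma Diff_singleton_other_part:
  assumes "disjoint_family_on Q I" "k \<in> I" "l \<in> I" "k \<noteq> l" "w \<in> Q l"
  shows "Q k - {w} = Q k"
  using assms disjoint_family_onD[OF assms(1-4)] by blast

lemma sum_card_Diff_singleton_part:
  fixes t :: nat
  assumes disj: "disjoint_family_on Q {..<t}" and fin: "finite (Q i)"
    and "i < t" and "v \<in> Q i"
  shows "(\<Sum>k<t. card (Q k - {v})) + 1 = (\<Sum>k<t. card (Q k))"
proof -
  have other: "(\<Sum>k\<in>{..<t} - {i}. card (Q k - {v})) = (\<Sum>k\<in>{..<t} - {i}. card (Q k))"
    using Diff_singleton_other_part[OF disj _ _ _ \<open>v \<in> Q i\<close>] \<open>i < t\<close>
    by (intro sum.cong) auto
  have "card (Q i - {v}) + 1 = card (Q i)"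
    using card_Suc_Diff1[OF fin \<open>v \<in> Q i\<close>] by simp
  moreover have "(\<Sum>k<t. card (Q k)) = card (Q i) + (\<Sum>k\<in>{..<t} - {i}. card (Q k))"
    using \<open>i < t\<close> by (intro sum.remove) auto
  moreover have "(\<Sum>k<t. card (Q k - {v})) = card (Q i - {v}) + (\<Sum>k\<in>{..<t} - {i}. card (Q k - {v}))"
    using \<open>i < t\<close> by (intro sum.remove) auto
  ultimately show ?thesis
    using other by linarith
qed

lemma odd_sum_imp_odd_term:
  fixes f :: "'i \<Rightarrow> nat"
  assumes "odd (\<Sum>k\<in>I. f k)"
  obtains l where "l \<in> I" "odd (f l)"
proof (rule ccontr)
  assume "\<not> thesis"
  with that have "\<forall>l\<in>I. even (f l)" by blast
  then have "even (\<Sum>k\<in>I. f k)" by (auto intro: dvd_sum)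
  with assms show False by contradiction
qed

lemma grimN_if_reply_to_grimP:
  assumes "l < t" "w \<in> Q l" "m < t" "m \<noteq> l" "Q m \<noteq> {}"
    and "grimP (complete_multipartite t (\<lambda>k. Q k - {w}))"
  shows "grimN (complete_multipartite t Q)"
proof (rule N_intro)
  show "w \<in> grim_vertices (complete_multipartite t Q)"
    unfolding grim_vertices_complete_multipartite using assms(1-5) by blast
  show "grimP (grim_move w (complete_multipartite t Q))"
    using assms(6) by (simp add: grim_move_complete_multipartite)
qed

text \<open>The reply of the second player. Only part \<open>i\<close> may be a singleton (it is the part the
first player just moved in), and \<open>j\<close> witnesses that the position is not over yet.\<close>

lemma admissible_reply:
  assumes disj: "disjoint_family_on Q {..<t}" and fin: "\<forall>k<t. finite (Q k)"
    and no_singleton: "\<forall>k<t. k \<noteq> i \<longrightarrow> card (Q k) \<noteq> 1"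
    and "i < t" "Q i \<noteq> {}" "j < t" "j \<noteq> i" "Q j \<noteq> {}"
    and odd: "odd (\<Sum>k<t. card (Q k))"
  obtains l w m where "l < t" "w \<in> Q l" "m < t" "m \<noteq> l" "Q m \<noteq> {}"
    "\<forall>k<t. card (Q k - {w}) \<noteq> 1"
proof (cases "card (Q i) = 1")
  case True
  then obtain w where "Q i = {w}" by (rule card_1_singletonE)
  have "\<forall>k<t. card (Q k - {w}) \<noteq> 1"
  proof (intro allI impI)
    fix k assume "k < t"
    show "card (Q k - {w}) \<noteq> 1"
    proof (cases "k = i")
      case False
      then have "Q k - {w} = Q k"
        using Diff_singleton_other_part[OF disj] \<open>Q i = {w}\<close> \<open>k < t\<close> \<open>i < t\<close> by simp
      then show ?thesis using no_singleton \<open>k < t\<close> False by simp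
    qed (simp add: \<open>Q i = {w}\<close>)
  qed
  then show ?thesis
    using that[of i w j] \<open>Q i = {w}\<close> \<open>i < t\<close> \<open>j < t\<close> \<open>j \<noteq> i\<close> \<open>Q j \<noteq> {}\<close> by simp
next
  case False
  obtain l where "l < t" and odd_l: "odd (card (Q l))"
    using odd by (rule odd_sum_imp_odd_term) simp
  have "card (Q l) \<noteq> 1"
    using False no_singleton \<open>l < t\<close> by (cases "l = i") auto
  with odd_l have "card (Q l) \<ge> 3" by presburger
  then obtain w where "w \<in> Q l"
    by (metis card.empty ex_in_conv not_numeral_le_zero)
  have "card (Q l - {w}) \<ge> 2"
    using \<open>card (Q l) \<ge> 3\<close> \<open>w \<in> Q l\<close> fin \<open>l < t\<close> by simp
  have "\<forall>k<t. card (Q k - {w}) \<noteq> 1"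
  proof (intro allI impI)
    fix k assume "k < t"
    show "card (Q k - {w}) \<noteq> 1"
    proof (cases "k = l")
      case True
      then show ?thesis using \<open>card (Q l - {w}) \<ge> 2\<close> by simp
    next
      case False
      then have "Q k - {w} = Q k"
        using Diff_singleton_other_part[OF disj _ _ _ \<open>w \<in> Q l\<close>] \<open>k < t\<close> \<open>l < t\<close> by simp
      then show ?thesis using no_singleton \<open>card (Q i) \<noteq> 1\<close> \<open>k < t\<close> by (cases "k = i") auto
    qed
  qed
  moreover obtain m where "m < t" "m \<noteq> l" "Q m \<noteq> {}"
  proof (cases "l = i")
    case True
    then show ?thesis using that[of j] \<open>j < t\<close> \<open>j \<noteq> i\<close> \<open>Q j \<noteq> {}\<close> by simp
  next
    case False
    then show ?thesis using that[of i] \<open>i < t\<close> \<open>Q i \<noteq> {}\<close> by simp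
  qed
  ultimately show ?thesis using that[of l w m] \<open>l < t\<close> \<open>w \<in> Q l\<close> by simp
qed

lemma grimP_complete_multipartite_if_even:
  fixes t :: nat
  assumes "disjoint_family_on Q {..<t}" "\<forall>k<t. finite (Q k)" "\<forall>k<t. card (Q k) \<noteq> 1"
    and "even (\<Sum>k<t. card (Q k))"
  shows "grimP (complete_multipartite t Q)"
  using assms
proof (induction "\<Sum>k<t. card (Q k)" arbitrary: Q rule: less_induct)
  case less
  note disj = less.prems(1) and fin = less.prems(2) and no_singleton = less.prems(3)
  show ?case
  proof (rule P_intro)
    fix v assume "v \<in> grim_vertices (complete_multipartite t Q)"
    then obtain i j where "i < t" "v \<in> Q i" "j < t" "j \<noteq> i" "Q j \<noteq> {}"
      unfolding grim_vertices_complete_multipartite by blast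
    define Q' where "Q' = (\<lambda>k. Q k - {v})"
    have disj': "disjoint_family_on Q' {..<t}"
      unfolding Q'_def using disj by (rule disjoint_family_on_Diff_singleton)
    have fin': "\<forall>k<t. finite (Q' k)"
      unfolding Q'_def using fin by simp
    have other: "Q' k = Q k" if "k < t" "k \<noteq> i" for k
      unfolding Q'_def using Diff_singleton_other_part[OF disj _ _ that(2)] that(1) \<open>i < t\<close> \<open>v \<in> Q i\<close>
      by simp
    have sum': "(\<Sum>k<t. card (Q' k)) + 1 = (\<Sum>k<t. card (Q k))"
      unfolding Q'_def using sum_card_Diff_singleton_part[OF disj] fin \<open>i < t\<close> \<open>v \<in> Q i\<close> by simp
    have "card (Q i) \<noteq> 0" "card (Q i) \<noteq> 1"
      using fin no_singleton \<open>i < t\<close> \<open>v \<in> Q i\<close> by auto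
    then have "card (Q' i) \<noteq> 0"
      unfolding Q'_def using \<open>v \<in> Q i\<close> by (simp add: card_Diff_singleton)
    then have "Q' i \<noteq> {}" by auto
    obtain l w m where "l < t" "w \<in> Q' l" "m < t" "m \<noteq> l" "Q' m \<noteq> {}"
      and no_singleton': "\<forall>k<t. card (Q' k - {w}) \<noteq> 1"
    proof (rule admissible_reply[OF disj' fin' _ \<open>i < t\<close> \<open>Q' i \<noteq> {}\<close> \<open>j < t\<close> \<open>j \<noteq> i\<close>])
      show "\<forall>k<t. k \<noteq> i \<longrightarrow> card (Q' k) \<noteq> 1"
        using other no_singleton by simp
      show "Q' j \<noteq> {}"
        using other \<open>j < t\<close> \<open>j \<noteq> i\<close> \<open>Q j \<noteq> {}\<close> by simp
      show "odd (\<Sum>k<t. card (Q' k))"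
        using sum' \<open>even (\<Sum>k<t. card (Q k))\<close> by presburger
    qed
    have "(\<Sum>k<t. card (Q' k - {w})) + 1 = (\<Sum>k<t. card (Q' k))"
      using sum_card_Diff_singleton_part[OF disj'] fin' \<open>l < t\<close> \<open>w \<in> Q' l\<close> by simp
    then have "(\<Sum>k<t. card (Q' k - {w})) < (\<Sum>k<t. card (Q k))"
      and "even (\<Sum>k<t. card (Q' k - {w}))"
      using sum' \<open>even (\<Sum>k<t. card (Q k))\<close> by presburger+
    then have "grimP (complete_multipartite t (\<lambda>k. Q' k - {w}))"
      using less.hyps disjoint_family_on_Diff_singleton[OF disj'] fin' no_singleton' by simp
    then have "grimN (complete_multipartite t Q')"
      by (rule grimN_if_reply_to_grimP[OF \<open>l < t\<close> \<open>w \<in> Q' l\<close> \<open>m < t\<close> \<open>m \<noteq> l\<close> \<open>Q' m \<noteq> {}\<close>])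
    then show "grimN (grim_move v (complete_multipartite t Q))"
      unfolding Q'_def grim_move_complete_multipartite .
  qed
qed

lemma grimN_complete_multipartite_if_odd:
  fixes t :: nat
  assumes disj: "disjoint_family_on Q {..<t}" and fin: "\<forall>k<t. finite (Q k)"
    and "\<forall>k<t. card (Q k) \<noteq> 1"
    and "i < t" "Q i \<noteq> {}" "j < t" "j \<noteq> i" "Q j \<noteq> {}"
    and odd: "odd (\<Sum>k<t. card (Q k))"
  shows "grimN (complete_multipartite t Q)"
proof -
  have "\<forall>k<t. k \<noteq> i \<longrightarrow> card (Q k) \<noteq> 1"
    using assms(3) by simp
  then obtain l w m where "l < t" "w \<in> Q l" "m < t" "m \<noteq> l" "Q m \<noteq> {}"
    and no_singleton: "\<forall>k<t. card (Q k - {w}) \<noteq> 1"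
    using admissible_reply[OF disj fin _ assms(4-8) odd] by metis
  have "(\<Sum>k<t. card (Q k - {w})) + 1 = (\<Sum>k<t. card (Q k))"
    using sum_card_Diff_singleton_part[OF disj] fin \<open>l < t\<close> \<open>w \<in> Q l\<close> by simp
  with odd have "even (\<Sum>k<t. card (Q k - {w}))" by presburger
  then have "grimP (complete_multipartite t (\<lambda>k. Q k - {w}))"
    using fin no_singleton
    by (intro grimP_complete_multipartite_if_even disjoint_family_on_Diff_singleton[OF disj]) auto
  then show ?thesis
    by (rule grimN_if_reply_to_grimP[OF \<open>l < t\<close> \<open>w \<in> Q l\<close> \<open>m < t\<close> \<open>m \<noteq> l\<close> \<open>Q m \<noteq> {}\<close>])
qed

theorem theorem3p4:
  fixes t :: nat and n :: "nat \<Rightarrow> nat" and P :: "nat \<Rightarrow> 'a set"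
  assumes "t > 2"
    and "\<And>i. i < t \<Longrightarrow> card (P i) = n i"
    and "\<And>i. i < t \<Longrightarrow> n i \<ge> 2"
    and "\<And>i j. i < t \<Longrightarrow> j < t \<Longrightarrow> i \<noteq> j \<Longrightarrow> P i \<inter> P j = {}"
  shows "grimP (complete_multipartite t P) \<longleftrightarrow> even (\<Sum>i<t. n i)"
proof -
  have card_ge_2: "card (P i) \<ge> 2" if "i < t" for i
    using assms(2,3) that by simp
  then have "finite (P i) \<and> P i \<noteq> {}" if "i < t" for i
    using that card_gt_0_iff[of "P i"] by fastforce
  then have fin: "\<forall>i<t. finite (P i)" and nonempty: "P 0 \<noteq> {}" "P 1 \<noteq> {}"
    using \<open>t > 2\<close> by auto
  have no_singleton: "\<forall>i<t. card (P i) \<noteq> 1"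
    using card_ge_2 by fastforce
  have disj: "disjoint_family_on P {..<t}"
    using assms(4) by (auto simp: disjoint_family_on_def)
  have total: "(\<Sum>i<t. card (P i)) = (\<Sum>i<t. n i)"
    using assms(2) by simp
  have "odd (\<Sum>i<t. card (P i)) \<Longrightarrow> grimN (complete_multipartite t P)"
    using grimN_complete_multipartite_if_odd[OF disj fin no_singleton _ nonempty(1) _ _ nonempty(2)]
      \<open>t > 2\<close> by simp
  then show ?thesis
    using grimP_complete_multipartite_if_even[OF disj fin no_singleton] grimN_imp_not_grimP total
    by metis
qed

end
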